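(* Let $(G,\cdot)$ be a WIPL with identity $e$, let $(H,\circ)$ be a WIPL with identity $e'$, and let $(A,B,C)$ be an isotopism from $(G,\cdot)$ to $(H,\circ)$. Put $a=e'A^{-1}$ and $b=e'B^{-1}$. Then $C$ is an isomorphism from $(G,\cdot)$ onto $(H,\circ)$ if and only if $(J_\rho L_b J_\lambda,\ J_\lambda R_a J_\rho,\ I)\in AUT(G,\cdot)$. Moreover, when these equivalent conditions hold, $(J_\lambda R_a J_\rho,\ J_\rho L_b J_\lambda,\ R_aL_b)\in AUT(G,\cdot)$, and if in addition $x\cdot x=e$ for all $x\in G$, then $(R_a,L_b,R_aL_b)\in AUT(G,\cdot)$.
   Context: Maps are written on the right of their arguments ($xU$) and composed left to right: $UV$ means first apply $U$, then $V$; $I$ is the identity map. For a loop $(L,\cdot)$ with identity $e$, $x^\rho$ and $x^\lambda$ denote the right and left inverses of $x$ ($x x^\rho=e=x^\lambda x$), and $J_\rho:x\mapsto x^\rho$, $J_\lambda:x\mapsto x^\lambda$, $L_x:y\mapsto xy$, $R_x:y\mapsto yx$ (so $J_\lambda=J_\rho^{-1}$). $L$ is a weak inverse property loop (WIPL) if $xy\cdot z=e$ implies $x\cdot yz=e$ for all $x,y,z\in L$. A triple $(U,V,W)$ of bijections $G\to H$ between loops $(G,\cdot)$ and $(H,\circ)$ is an isotopism if $xU\circ yV=(x\cdot y)W$ for all $x,y\in G$; an autotopism of $G$ is an isotopism from $G$ to itself, and $AUT(G,\cdot)$ denotes the group of autotopisms under componentwise composition. *)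

theory Defs
  imports Main
begin

text \<open>A loop with multiplication mult and identity e, carried by the whole type.
  Maps are ordinary HOL functions; the paper's left-to-right product UV is V o U.\<close>

definition loop :: "('a \<Rightarrow> 'a \<Rightarrow> 'a) \<Rightarrow> 'a \<Rightarrow> bool" where
  "loop mult e \<longleftrightarrow>
     (\<forall>x. mult e x = x \<and> mult x e = x) \<and>
     (\<forall>a b. \<exists>!x. mult a x = b) \<and>
     (\<forall>a b. \<exists>!y. mult y a = b)"

definition WIPL :: "('a \<Rightarrow> 'a \<Rightarrow> 'a) \<Rightarrow> 'a \<Rightarrow> bool" where
  "WIPL mult e \<longleftrightarrow> loop mult e \<and>
     (\<forall>x y z. mult (mult x y) z = e \<longrightarrow> mult x (mult y z) = e)"

definition rinv :: "('a \<Rightarrow> 'a \<Rightarrow> 'a) \<Rightarrow> 'a \<Rightarrow> 'a \<Rightarrow> 'a" where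
  "rinv mult e x = (THE y. mult x y = e)"

definition linv :: "('a \<Rightarrow> 'a \<Rightarrow> 'a) \<Rightarrow> 'a \<Rightarrow> 'a \<Rightarrow> 'a" where
  "linv mult e x = (THE y. mult y x = e)"

definition isotopism ::
  "('a \<Rightarrow> 'a \<Rightarrow> 'a) \<Rightarrow> ('b \<Rightarrow> 'b \<Rightarrow> 'b) \<Rightarrow> ('a \<Rightarrow> 'b) \<Rightarrow> ('a \<Rightarrow> 'b) \<Rightarrow> ('a \<Rightarrow> 'b) \<Rightarrow> bool" where
  "isotopism multG multH U V W \<longleftrightarrow> bij U \<and> bij V \<and> bij W \<and>
     (\<forall>x y. multH (U x) (V y) = W (multG x y))"

definition AUT :: "('a \<Rightarrow> 'a \<Rightarrow> 'a) \<Rightarrow> (('a \<Rightarrow> 'a) \<times> ('a \<Rightarrow> 'a) \<times> ('a \<Rightarrow> 'a)) set" where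
  "AUT mult = {(U, V, W). isotopism mult mult U V W}"

definition loop_isomorphism :: "('a \<Rightarrow> 'a \<Rightarrow> 'a) \<Rightarrow> ('b \<Rightarrow> 'b \<Rightarrow> 'b) \<Rightarrow> ('a \<Rightarrow> 'b) \<Rightarrow> bool" where
  "loop_isomorphism multG multH f \<longleftrightarrow> bij f \<and> (\<forall>x y. f (multG x y) = multH (f x) (f y))"

end

theory Submission
  imports Defs
begin

(*
  Let P = J_rho L_b J_lambda and Q = J_lambda R_a J_rho (paper notation),
  i.e. P x = (b x^rho)^lambda and Q y = (y^lambda a)^rho.  In a WIPL, P is the inverse
  of the right translation R_b and Q the inverse of the left translation L_a.

  1. For any isotopism (A,B,C) between loops one has C(xb) = xA and C(ay) = yB, so C is
     an isomorphism iff (xb)(ay) = xy for all x, y; substituting x := P x, y := Q y this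
     says exactly that (P,Q,I) is an autotopism.
  2. In a WIPL every autotopism (U,V,W) yields two "shifted" autotopisms
     (J_rho W J_lambda, U, J_rho V J_lambda) and (V, J_lambda W J_rho, J_lambda U J_rho).
     Applied to (P,Q,I) they give (I,P,R_a) and (Q,I,L_b); their product is
     (Q,P,R_a L_b).
  3. If x x = e for all x then both inversions are the identity, so P = L_b and Q = R_a.
*)

lemma loop_lid: "loop m e \<Longrightarrow> m e x = x"
  by (simp add: loop_def)

lemma loop_rid: "loop m e \<Longrightarrow> m x e = x"
  by (simp add: loop_def)

lemma loop_left_cancel: "loop m e \<Longrightarrow> m a x = m a y \<Longrightarrow> x = y"
  unfolding loop_def by metis

lemma loop_right_cancel: "loop m e \<Longrightarrow> m x a = m y a \<Longrightarrow> x = y"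
  unfolding loop_def by metis

lemma loop_left_solvable: "loop m e \<Longrightarrow> \<exists>x. m a x = c"
  unfolding loop_def by metis

lemma loop_right_solvable: "loop m e \<Longrightarrow> \<exists>x. m x a = c"
  unfolding loop_def by metis

lemma bij_left_translation: "loop m e \<Longrightarrow> bij (\<lambda>y. m b y)"
  unfolding bij_def inj_def surj_def using loop_left_cancel loop_left_solvable by metis

lemma bij_right_translation: "loop m e \<Longrightarrow> bij (\<lambda>y. m y a)"
  unfolding bij_def inj_def surj_def using loop_right_cancel loop_right_solvable by metis

lemma rinv_right: assumes "loop m e" shows "m x (rinv m e x) = e"
proof -
  have "\<exists>!y. m x y = e" using assms unfolding loop_def by blast
  thus ?thesis unfolding rinv_def by (rule theI')
qed

lemma linv_left: assumes "loop m e" shows "m (linv m e x) x = e"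
proof -
  have "\<exists>!y. m y x = e" using assms unfolding loop_def by blast
  thus ?thesis unfolding linv_def by (rule theI')
qed

lemma rinv_unique: "loop m e \<Longrightarrow> m x y = e \<Longrightarrow> rinv m e x = y"
  using rinv_right loop_left_cancel by metis

lemma linv_unique: "loop m e \<Longrightarrow> m y x = e \<Longrightarrow> linv m e x = y"
  using linv_left loop_right_cancel by metis

lemma rinv_linv [simp]: "loop m e \<Longrightarrow> rinv m e (linv m e x) = x"
  using rinv_unique linv_left by metis

lemma linv_rinv [simp]: "loop m e \<Longrightarrow> linv m e (rinv m e x) = x"
  using linv_unique rinv_right by metis

lemma bij_rinv: "loop m e \<Longrightarrow> bij (rinv m e)"
  by (rule o_bij[of "linv m e"]) (auto simp: fun_eq_iff)

lemma bij_linv: "loop m e \<Longrightarrow> bij (linv m e)"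
  by (rule o_bij[of "rinv m e"]) (auto simp: fun_eq_iff)

lemma inverses_exponent_two:
  assumes "loop m e" and "\<forall>x. m x x = e"
  shows "rinv m e = id" and "linv m e = id"
  using assms by (simp_all add: fun_eq_iff rinv_unique linv_unique)

lemma WIPL_loop: "WIPL m e \<Longrightarrow> loop m e"
  by (simp add: WIPL_def)

lemma WIPL_weak_inverse: "WIPL m e \<Longrightarrow> m (m x y) z = e \<Longrightarrow> m x (m y z) = e"
  by (simp add: WIPL_def)

lemma WIPL_weak_inverse_converse:
  assumes G: "WIPL m e" and h: "m x (m y z) = e"
  shows "m (m x y) z = e"
proof -
  note L = WIPL_loop[OF G]
  have "m x (m y (rinv m e (m x y))) = e"
    using WIPL_weak_inverse[OF G rinv_right[OF L]] .
  with h have "rinv m e (m x y) = z"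
    using L loop_left_cancel by metis
  thus ?thesis using rinv_right[OF L] by metis
qed

lemma WIPL_rinv_identity:
  assumes G: "WIPL m e" shows "m x (rinv m e (m y x)) = rinv m e y"
  using WIPL_weak_inverse[OF G rinv_right[OF WIPL_loop[OF G], of "m y x"]]
    rinv_unique[OF WIPL_loop[OF G]] by metis

lemma WIPL_linv_identity:
  assumes G: "WIPL m e" shows "m (linv m e (m x y)) x = linv m e y"
  using WIPL_weak_inverse_converse[OF G, of "linv m e (m x y)" x y]
    linv_left[OF WIPL_loop[OF G], of "m x y"] linv_unique[OF WIPL_loop[OF G]] by metis

lemma WIPL_inverse_right_translation:
  fixes b :: 'a
  assumes G: "WIPL m e"
  defines "P \<equiv> linv m e \<circ> (\<lambda>y. m b y) \<circ> rinv m e"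
  shows "m (P x) b = x" and "P (m x b) = x"
  using WIPL_linv_identity[OF G, of b "rinv m e x"] WIPL_rinv_identity[OF G, of b x]
  by (simp_all add: P_def WIPL_loop[OF G])

lemma WIPL_inverse_left_translation:
  fixes a :: 'a
  assumes G: "WIPL m e"
  defines "Q \<equiv> rinv m e \<circ> (\<lambda>y. m y a) \<circ> linv m e"
  shows "m a (Q y) = y" and "Q (m a y) = y"
  using WIPL_rinv_identity[OF G, of a "linv m e y"] WIPL_linv_identity[OF G, of a y]
  by (simp_all add: Q_def WIPL_loop[OF G])

lemma AUT_comp:
  assumes "(U1, V1, W1) \<in> AUT m" and "(U2, V2, W2) \<in> AUT m"
  shows "(U2 \<circ> U1, V2 \<circ> V1, W2 \<circ> W1) \<in> AUT m"
  using assms by (auto simp: AUT_def isotopism_def intro: bij_comp)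

lemma WIPL_AUT_shift_left:
  assumes G: "WIPL m e" and T: "(U, V, W) \<in> AUT m"
  shows "(linv m e \<circ> W \<circ> rinv m e, U, linv m e \<circ> V \<circ> rinv m e) \<in> AUT m"
proof -
  note L = WIPL_loop[OF G]
  have bij: "bij U" "bij V" "bij W" and h: "\<And>u v. m (U u) (V v) = W (m u v)"
    using T by (auto simp: AUT_def isotopism_def)
  have "m (linv m e (W (rinv m e s))) (U u) = linv m e (V (rinv m e (m s u)))" for s u
  proof -
    let ?v = "rinv m e (m s u)"
    have "m s (m u ?v) = e" using WIPL_weak_inverse[OF G rinv_right[OF L]] .
    hence "rinv m e s = m u ?v" using rinv_unique[OF L] by metis
    hence "W (rinv m e s) = m (U u) (V ?v)" using h by simp
    thus ?thesis using WIPL_linv_identity[OF G] by simp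
  qed
  thus ?thesis using bij bij_rinv[OF L] bij_linv[OF L]
    by (auto simp: AUT_def isotopism_def intro!: bij_comp)
qed

lemma WIPL_AUT_shift_right:
  assumes G: "WIPL m e" and T: "(U, V, W) \<in> AUT m"
  shows "(V, rinv m e \<circ> W \<circ> linv m e, rinv m e \<circ> U \<circ> linv m e) \<in> AUT m"
proof -
  note L = WIPL_loop[OF G]
  have bij: "bij U" "bij V" "bij W" and h: "\<And>u v. m (U u) (V v) = W (m u v)"
    using T by (auto simp: AUT_def isotopism_def)
  have "m (V v) (rinv m e (W (linv m e t))) = rinv m e (U (linv m e (m v t)))" for v t
  proof -
    let ?u = "linv m e (m v t)"
    have "m (m ?u v) t = e" using WIPL_weak_inverse_converse[OF G linv_left[OF L]] .
    hence "linv m e t = m ?u v" using linv_unique[OF L] by metis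
    hence "W (linv m e t) = m (U ?u) (V v)" using h by simp
    thus ?thesis using WIPL_rinv_identity[OF G] by simp
  qed
  thus ?thesis using bij bij_rinv[OF L] bij_linv[OF L]
    by (auto simp: AUT_def isotopism_def intro!: bij_comp)
qed

lemma isotopism_components:
  assumes H: "loop mH e'" and I: "isotopism mG mH A B C"
  shows "C (mG x (inv B e')) = A x" and "C (mG (inv A e') y) = B y"
proof -
  have "bij A" "bij B" and iso: "\<And>x y. mH (A x) (B y) = C (mG x y)"
    using I by (auto simp: isotopism_def)
  hence "A (inv A e') = e'" "B (inv B e') = e'"
    by (simp_all add: bij_is_surj surj_f_inv_f)
  thus "C (mG x (inv B e')) = A x" "C (mG (inv A e') y) = B y"
    using iso[symmetric] loop_lid[OF H] loop_rid[OF H] by simp_all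
qed

lemma isomorphism_iff_middle_identity:
  assumes G: "loop mG e" and H: "loop mH e'" and I: "isotopism mG mH A B C"
  defines "a \<equiv> inv A e'" and "b \<equiv> inv B e'"
  shows "loop_isomorphism mG mH C \<longleftrightarrow> (\<forall>x y. mG (mG x b) (mG a y) = mG x y)"
proof -
  have bC: "bij C" and iso: "\<And>x y. mH (A x) (B y) = C (mG x y)"
    using I by (auto simp: isotopism_def)
  have CA: "\<And>x. C (mG x b) = A x" and CB: "\<And>y. C (mG a y) = B y"
    using isotopism_components[OF H I] by (simp_all add: a_def b_def)
  show ?thesis
  proof
    assume "loop_isomorphism mG mH C"
    hence hom: "\<And>x y. C (mG x y) = mH (C x) (C y)" by (simp add: loop_isomorphism_def)
    have "C (mG (mG x b) (mG a y)) = C (mG x y)" for x y using hom CA CB iso by metis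
    thus "\<forall>x y. mG (mG x b) (mG a y) = mG x y"
      using bC by (simp add: bij_is_inj inj_eq)
  next
    assume S: "\<forall>x y. mG (mG x b) (mG a y) = mG x y"
    have "C (mG u v) = mH (C u) (C v)" for u v
    proof -
      obtain x where x: "mG x b = u" using loop_right_solvable[OF G] by blast
      obtain y where y: "mG a y = v" using loop_left_solvable[OF G] by blast
      have "C (mG u v) = C (mG x y)" using S x y by metis
      thus ?thesis using iso CA CB x y by metis
    qed
    thus "loop_isomorphism mG mH C" using bC by (simp add: loop_isomorphism_def)
  qed
qed

lemma WIPL_middle_identity_iff_AUT:
  fixes a b :: 'a
  assumes G: "WIPL m e"
  defines "P \<equiv> linv m e \<circ> (\<lambda>y. m b y) \<circ> rinv m e"
      and "Q \<equiv> rinv m e \<circ> (\<lambda>y. m y a) \<circ> linv m e"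
  shows "(\<forall>x y. m (m x b) (m a y) = m x y) \<longleftrightarrow> (P, Q, id) \<in> AUT m"
proof -
  note L = WIPL_loop[OF G]
  have bij: "bij P" "bij Q"
    unfolding P_def Q_def
    using bij_rinv[OF L] bij_linv[OF L] bij_left_translation[OF L] bij_right_translation[OF L]
    by (auto intro!: bij_comp)
  note Pinv = WIPL_inverse_right_translation[OF G, of b, folded P_def]
  note Qinv = WIPL_inverse_left_translation[OF G, of a, folded Q_def]
  have "(\<forall>x y. m (m x b) (m a y) = m x y) \<longleftrightarrow> (\<forall>x y. m (P x) (Q y) = m x y)"
    using Pinv Qinv by metis
  thus ?thesis using bij by (simp add: AUT_def isotopism_def)
qed

theorem mainTheorem2:
  fixes mG :: "'a \<Rightarrow> 'a \<Rightarrow> 'a" and e :: 'a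
    and mH :: "'b \<Rightarrow> 'b \<Rightarrow> 'b" and e' :: 'b
    and A B C :: "'a \<Rightarrow> 'b"
  assumes "WIPL mG e" and "WIPL mH e'" and "isotopism mG mH A B C"
  defines "a \<equiv> inv A e'" and "b \<equiv> inv B e'"
  shows "(loop_isomorphism mG mH C \<longleftrightarrow>
            (linv mG e \<circ> (\<lambda>y. mG b y) \<circ> rinv mG e,
             rinv mG e \<circ> (\<lambda>y. mG y a) \<circ> linv mG e,
             id) \<in> AUT mG)
       \<and> (loop_isomorphism mG mH C \<longrightarrow>
            (rinv mG e \<circ> (\<lambda>y. mG y a) \<circ> linv mG e,
             linv mG e \<circ> (\<lambda>y. mG b y) \<circ> rinv mG e,
             (\<lambda>y. mG b y) \<circ> (\<lambda>y. mG y a)) \<in> AUT mG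
          \<and> ((\<forall>x. mG x x = e) \<longrightarrow>
               ((\<lambda>y. mG y a), (\<lambda>y. mG b y), (\<lambda>y. mG b y) \<circ> (\<lambda>y. mG y a)) \<in> AUT mG))"
proof -
  note G = assms(1) and LG = WIPL_loop[OF assms(1)] and LH = WIPL_loop[OF assms(2)]
  define P where "P = linv mG e \<circ> (\<lambda>y. mG b y) \<circ> rinv mG e"
  define Q where "Q = rinv mG e \<circ> (\<lambda>y. mG y a) \<circ> linv mG e"
  have iso_iff: "loop_isomorphism mG mH C \<longleftrightarrow> (P, Q, id) \<in> AUT mG"
    using isomorphism_iff_middle_identity[OF LG LH assms(3)]
      WIPL_middle_identity_iff_AUT[OF G, of b a]
    by (simp add: P_def Q_def a_def b_def)
  have product: "(Q, P, (\<lambda>y. mG b y) \<circ> (\<lambda>y. mG y a)) \<in> AUT mG"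
    if T: "(P, Q, id) \<in> AUT mG"
  proof -
    have "(id, P, (\<lambda>y. mG y a)) \<in> AUT mG"
      using WIPL_AUT_shift_left[OF G T] LG by (simp add: Q_def comp_def id_def)
    moreover have "(Q, id, (\<lambda>y. mG b y)) \<in> AUT mG"
      using WIPL_AUT_shift_right[OF G T] LG by (simp add: P_def comp_def id_def)
    ultimately show ?thesis using AUT_comp by fastforce
  qed
  have exponent_two: "P = (\<lambda>y. mG b y) \<and> Q = (\<lambda>y. mG y a)" if "\<forall>x. mG x x = e"
    using inverses_exponent_two[OF LG that] by (simp add: P_def Q_def)
  show ?thesis
    unfolding P_def[symmetric] Q_def[symmetric]
    using iso_iff product exponent_two by metis
qed

end
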